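(* Let $i\colon H\to G$ be a faithful functor of finite groupoids. Let $E\xrightarrow{k}E'\xrightarrow{\iota_{E'}}H$ and $F\xrightarrow{\ell}F'\xrightarrow{\iota_{F'}}H$ be faithful functors, and put $\iota_E=\iota_{E'}k$, $\iota_F=\iota_{F'}\ell$. Consider the decompositions $E\times_GF\cong E\times_HF\sqcup\partial_i(E,F)$ and $E'\times_GF'\cong E'\times_HF'\sqcup\partial_i(E',F')$. Then the canonical functor $E\times_GF\to E'\times_GF'$, $(x,y,g)\mapsto(k(x),\ell(y),g)$, respects these decompositions: it maps (the image of) $E\times_HF$ into (the image of) $E'\times_HF'$, where it agrees with the functor $(x,y,h)\mapsto(k(x),\ell(y),h)$, and it maps $\partial_i(E,F)$ into $\partial_i(E',F')$. Hence it defines a unique functor $\partial_i(k,\ell)\colon\partial_i(E,F)\to\partial_i(E',F')$, and this functor is faithful.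
   Context: A finite groupoid is a finite category all of whose morphisms are invertible. For functors $a\colon X\to Z$, $b\colon Y\to Z$ of finite groupoids, the isocomma $X\times_ZY$ has objects the triples $(x,y,g)$ with $x\in X$, $y\in Y$, $g\colon a(x)\to b(y)$ an isomorphism in $Z$, and morphisms $(x,y,g)\to(x',y',g')$ the pairs $(h,k)$, $h\colon x\to x'$, $k\colon y\to y'$, with $g'a(h)=b(k)g$. Here $E\times_HF$ is the isocomma of $\iota_E,\iota_F$ and $E\times_GF$ that of $i\iota_E,i\iota_F$ (similarly for $E',F'$). The functor $E\times_HF\to E\times_GF$, $(x,y,h)\mapsto(x,y,i(h))$, identity on morphisms, is fully faithful with image a union of connected components; $\partial_i(E,F)$ is the full subgroupoid of $E\times_GF$ consisting of the connected components not meeting this image, so that $E\times_GF\cong E\times_HF\sqcup\partial_i(E,F)$. *)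

theory Defs
  imports Main
begin

record ('o,'m) cat =
  Obj :: "'o set"
  Mor :: "'m set"
  Dom :: "'m \<Rightarrow> 'o"
  Cod :: "'m \<Rightarrow> 'o"
  Comp :: "'m \<Rightarrow> 'm \<Rightarrow> 'm"   (* Comp C g f = g \<circ> f, defined when Cod f = Dom g *)
  Idm :: "'o \<Rightarrow> 'm"

definition is_category :: "('o,'m) cat \<Rightarrow> bool" where
  "is_category C \<longleftrightarrow>
     (\<forall>f\<in>Mor C. Dom C f \<in> Obj C \<and> Cod C f \<in> Obj C) \<and>
     (\<forall>f\<in>Mor C. \<forall>g\<in>Mor C. Cod C f = Dom C g \<longrightarrow>
        Comp C g f \<in> Mor C \<and> Dom C (Comp C g f) = Dom C f \<and> Cod C (Comp C g f) = Cod C g) \<and>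
     (\<forall>x\<in>Obj C. Idm C x \<in> Mor C \<and> Dom C (Idm C x) = x \<and> Cod C (Idm C x) = x) \<and>
     (\<forall>f\<in>Mor C. Comp C f (Idm C (Dom C f)) = f \<and> Comp C (Idm C (Cod C f)) f = f) \<and>
     (\<forall>f\<in>Mor C. \<forall>g\<in>Mor C. \<forall>h\<in>Mor C. Cod C f = Dom C g \<longrightarrow> Cod C g = Dom C h \<longrightarrow>
        Comp C h (Comp C g f) = Comp C (Comp C h g) f)"

definition is_groupoid :: "('o,'m) cat \<Rightarrow> bool" where
  "is_groupoid C \<longleftrightarrow> is_category C \<and>
     (\<forall>f\<in>Mor C. \<exists>g\<in>Mor C. Dom C g = Cod C f \<and> Cod C g = Dom C f \<and>
        Comp C g f = Idm C (Dom C f) \<and> Comp C f g = Idm C (Cod C f))"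

definition finite_groupoid :: "('o,'m) cat \<Rightarrow> bool" where
  "finite_groupoid C \<longleftrightarrow> is_groupoid C \<and> finite (Obj C) \<and> finite (Mor C)"

definition is_functor :: "('o1,'m1) cat \<Rightarrow> ('o2,'m2) cat \<Rightarrow> ('o1 \<Rightarrow> 'o2) \<Rightarrow> ('m1 \<Rightarrow> 'm2) \<Rightarrow> bool" where
  "is_functor C D Fo Fm \<longleftrightarrow>
     (\<forall>x\<in>Obj C. Fo x \<in> Obj D) \<and>
     (\<forall>f\<in>Mor C. Fm f \<in> Mor D \<and> Dom D (Fm f) = Fo (Dom C f) \<and> Cod D (Fm f) = Fo (Cod C f)) \<and>
     (\<forall>f\<in>Mor C. \<forall>g\<in>Mor C. Cod C f = Dom C g \<longrightarrow> Fm (Comp C g f) = Comp D (Fm g) (Fm f)) \<and>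
     (\<forall>x\<in>Obj C. Fm (Idm C x) = Idm D (Fo x))"

definition faithful :: "('o1,'m1) cat \<Rightarrow> ('o2,'m2) cat \<Rightarrow> ('o1 \<Rightarrow> 'o2) \<Rightarrow> ('m1 \<Rightarrow> 'm2) \<Rightarrow> bool" where
  "faithful C D Fo Fm \<longleftrightarrow> is_functor C D Fo Fm \<and>
     (\<forall>f\<in>Mor C. \<forall>g\<in>Mor C. Dom C f = Dom C g \<longrightarrow> Cod C f = Cod C g \<longrightarrow> Fm f = Fm g \<longrightarrow> f = g)"

text \<open>Objects (x,y,g) with g : a x \<rightarrow> b y in Z; a morphism (x,y,g) \<rightarrow> (x',y',g') is recorded
  as (source, target, h, k) with g' \<circ> a(h) = b(k) \<circ> g.  (In a groupoid Z every g is an iso.)\<close>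

definition isocomma ::
  "('ox,'mx) cat \<Rightarrow> ('oy,'my) cat \<Rightarrow> ('oz,'mz) cat \<Rightarrow>
   ('ox \<Rightarrow> 'oz) \<Rightarrow> ('mx \<Rightarrow> 'mz) \<Rightarrow> ('oy \<Rightarrow> 'oz) \<Rightarrow> ('my \<Rightarrow> 'mz) \<Rightarrow>
   ('ox \<times> 'oy \<times> 'mz, ('ox \<times> 'oy \<times> 'mz) \<times> ('ox \<times> 'oy \<times> 'mz) \<times> 'mx \<times> 'my) cat" where
  "isocomma X Y Z ao am bo bm =
    (let Ob = {(x,y,g). x \<in> Obj X \<and> y \<in> Obj Y \<and> g \<in> Mor Z \<and> Dom Z g = ao x \<and> Cod Z g = bo y} in
     \<lparr> Obj = Ob,
       Mor = {(s,t,h,k). s \<in> Ob \<and> t \<in> Ob \<and>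
                h \<in> Mor X \<and> Dom X h = fst s \<and> Cod X h = fst t \<and>
                k \<in> Mor Y \<and> Dom Y k = fst (snd s) \<and> Cod Y k = fst (snd t) \<and>
                Comp Z (snd (snd t)) (am h) = Comp Z (bm k) (snd (snd s))},
       Dom = (\<lambda>(s,t,h,k). s),
       Cod = (\<lambda>(s,t,h,k). t),
       Comp = (\<lambda>(t',u,h',k') (s,t,h,k). (s, u, Comp X h' h, Comp Y k' k)),
       Idm = (\<lambda>(x,y,g). ((x,y,g), (x,y,g), Idm X x, Idm Y y)) \<rparr>)"

fun incl_o :: "('mh \<Rightarrow> 'mg) \<Rightarrow> 'a \<times> 'b \<times> 'mh \<Rightarrow> 'a \<times> 'b \<times> 'mg" where
  "incl_o im (x,y,h) = (x, y, im h)"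

fun incl_m :: "('mh \<Rightarrow> 'mg) \<Rightarrow> ('a \<times> 'b \<times> 'mh) \<times> ('a \<times> 'b \<times> 'mh) \<times> 'c \<times> 'd
               \<Rightarrow> ('a \<times> 'b \<times> 'mg) \<times> ('a \<times> 'b \<times> 'mg) \<times> 'c \<times> 'd" where
  "incl_m im (s,t,h,k) = (incl_o im s, incl_o im t, h, k)"

fun cmap_o :: "('a \<Rightarrow> 'a2) \<Rightarrow> ('b \<Rightarrow> 'b2) \<Rightarrow> 'a \<times> 'b \<times> 'm \<Rightarrow> 'a2 \<times> 'b2 \<times> 'm" where
  "cmap_o ko lo (x,y,g) = (ko x, lo y, g)"

fun cmap_m :: "('a \<Rightarrow> 'a2) \<Rightarrow> ('c \<Rightarrow> 'c2) \<Rightarrow> ('b \<Rightarrow> 'b2) \<Rightarrow> ('d \<Rightarrow> 'd2) \<Rightarrow>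
               ('a \<times> 'b \<times> 'm) \<times> ('a \<times> 'b \<times> 'm) \<times> 'c \<times> 'd \<Rightarrow>
               ('a2 \<times> 'b2 \<times> 'm) \<times> ('a2 \<times> 'b2 \<times> 'm) \<times> 'c2 \<times> 'd2" where
  "cmap_m ko km lo lm (s,t,h,k) = (cmap_o ko lo s, cmap_o ko lo t, km h, lm k)"

definition connected :: "('o,'m) cat \<Rightarrow> 'o \<Rightarrow> 'o \<Rightarrow> bool" where
  "connected C x y \<longleftrightarrow>
     (\<lambda>a b. \<exists>f\<in>Mor C. (Dom C f = a \<and> Cod C f = b) \<or> (Dom C f = b \<and> Cod C f = a))\<^sup>*\<^sup>* x y"

definition full_sub :: "('o,'m) cat \<Rightarrow> 'o set \<Rightarrow> ('o,'m) cat" where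
  "full_sub C S = C\<lparr> Obj := S, Mor := {f \<in> Mor C. Dom C f \<in> S \<and> Cod C f \<in> S} \<rparr>"

text \<open>Here (eo,em) = \<iota>_E : E \<rightarrow> H, (fo,fm) = \<iota>_F : F \<rightarrow> H, (io,im) = i : H \<rightarrow> G.\<close>

definition boundary ::
  "('oe,'me) cat \<Rightarrow> ('of,'mf) cat \<Rightarrow> ('oh,'mh) cat \<Rightarrow> ('og,'mg) cat \<Rightarrow>
   ('oh \<Rightarrow> 'og) \<Rightarrow> ('mh \<Rightarrow> 'mg) \<Rightarrow> ('oe \<Rightarrow> 'oh) \<Rightarrow> ('me \<Rightarrow> 'mh) \<Rightarrow> ('of \<Rightarrow> 'oh) \<Rightarrow> ('mf \<Rightarrow> 'mh) \<Rightarrow>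
   ('oe \<times> 'of \<times> 'mg, ('oe \<times> 'of \<times> 'mg) \<times> ('oe \<times> 'of \<times> 'mg) \<times> 'me \<times> 'mf) cat" where
  "boundary E F H G io im eo em fo fm =
    (let P = isocomma E F G (io \<circ> eo) (im \<circ> em) (io \<circ> fo) (im \<circ> fm);
         Q = isocomma E F H eo em fo fm
     in full_sub P {c \<in> Obj P. \<not> (\<exists>q \<in> Obj Q. connected P c (incl_o im q))})"

end

theory Submission
  imports Defs
begin

(* An object (x, y, g) of E \<times>_G F lies in the image of E \<times>_H F iff g = i(h) for some
   h : \<iota>_E x \<rightarrow> \<iota>_F y in H.  Since H is a groupoid, such an h can be transported along any
   morphism (a, b) of E \<times>_G F by conjugating it with \<iota>_E a and \<iota>_F b, so the image is a union
   of connected components and \<partial>_i(E,F) is just its complement.  A witness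
   h : \<iota>_E' (k x) \<rightarrow> \<iota>_F' (l y) for (k x, l y, g) is also one for (x, y, g), so the
   canonical functor maps the complement into the complement; faithfulness is inherited
   componentwise from k and l.  Besides functoriality, only invertibility in H and faithfulness
   of k and l are used. *)

lemma cat_Comp_Mor:
  "is_category C \<Longrightarrow> f \<in> Mor C \<Longrightarrow> g \<in> Mor C \<Longrightarrow> Cod C f = Dom C g \<Longrightarrow>
    Comp C g f \<in> Mor C \<and> Dom C (Comp C g f) = Dom C f \<and> Cod C (Comp C g f) = Cod C g"
  unfolding is_category_def by blast

lemma cat_Dom_Cod_Obj: "is_category C \<Longrightarrow> f \<in> Mor C \<Longrightarrow> Dom C f \<in> Obj C \<and> Cod C f \<in> Obj C"
  unfolding is_category_def by blast

lemma cat_Idm_unit: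
  "is_category C \<Longrightarrow> f \<in> Mor C \<Longrightarrow> Comp C f (Idm C (Dom C f)) = f \<and> Comp C (Idm C (Cod C f)) f = f"
  unfolding is_category_def by blast

lemma cat_Comp_assoc:
  "is_category C \<Longrightarrow> f \<in> Mor C \<Longrightarrow> g \<in> Mor C \<Longrightarrow> h \<in> Mor C \<Longrightarrow>
    Cod C f = Dom C g \<Longrightarrow> Cod C g = Dom C h \<Longrightarrow> Comp C h (Comp C g f) = Comp C (Comp C h g) f"
  unfolding is_category_def by blast

lemma groupoid_is_category: "is_groupoid C \<Longrightarrow> is_category C"
  by (simp add: is_groupoid_def)

lemma groupoid_inverse:
  "is_groupoid C \<Longrightarrow> f \<in> Mor C \<Longrightarrow> \<exists>g\<in>Mor C. Dom C g = Cod C f \<and> Cod C g = Dom C f \<and>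
    Comp C g f = Idm C (Dom C f) \<and> Comp C f g = Idm C (Cod C f)"
  unfolding is_groupoid_def by blast

lemma functor_Obj: "is_functor C D Fo Fm \<Longrightarrow> x \<in> Obj C \<Longrightarrow> Fo x \<in> Obj D"
  unfolding is_functor_def by blast

lemma functor_Mor:
  "is_functor C D Fo Fm \<Longrightarrow> f \<in> Mor C \<Longrightarrow>
    Fm f \<in> Mor D \<and> Dom D (Fm f) = Fo (Dom C f) \<and> Cod D (Fm f) = Fo (Cod C f)"
  unfolding is_functor_def by blast

lemma functor_Comp:
  "is_functor C D Fo Fm \<Longrightarrow> f \<in> Mor C \<Longrightarrow> g \<in> Mor C \<Longrightarrow> Cod C f = Dom C g \<Longrightarrow>
    Fm (Comp C g f) = Comp D (Fm g) (Fm f)"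
  unfolding is_functor_def by blast

lemma functor_Idm: "is_functor C D Fo Fm \<Longrightarrow> x \<in> Obj C \<Longrightarrow> Fm (Idm C x) = Idm D (Fo x)"
  unfolding is_functor_def by blast

lemma functor_maps_Obj_Mor:
  "is_functor C D Fo Fm \<Longrightarrow> (\<forall>x\<in>Obj C. Fo x \<in> Obj D) \<and> (\<forall>f\<in>Mor C. Fm f \<in> Mor D)"
  unfolding is_functor_def by blast

lemma functor_compose:
  "is_functor C D Fo Fm \<Longrightarrow> is_functor D E Go Gm \<Longrightarrow> is_functor C E (Go \<circ> Fo) (Gm \<circ> Fm)"
  unfolding is_functor_def by auto

lemma faithful_functor: "faithful C D Fo Fm \<Longrightarrow> is_functor C D Fo Fm"
  by (simp add: faithful_def)

lemma faithful_full_sub: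
  assumes F: "faithful C D Fo Fm" and S: "S \<subseteq> Obj C" and ST: "Fo ` S \<subseteq> T"
  shows "faithful (full_sub C S) (full_sub D T) Fo Fm"
  using F S ST unfolding faithful_def is_functor_def full_sub_def by (auto 0 4)

lemma isocomma_Obj:
  "Obj (isocomma X Y Z ao am bo bm) =
    {(x,y,g). x \<in> Obj X \<and> y \<in> Obj Y \<and> g \<in> Mor Z \<and> Dom Z g = ao x \<and> Cod Z g = bo y}"
  by (simp add: isocomma_def Let_def)

lemma isocomma_Mor:
  "Mor (isocomma X Y Z ao am bo bm) =
    {(s,t,h,k). s \<in> Obj (isocomma X Y Z ao am bo bm) \<and> t \<in> Obj (isocomma X Y Z ao am bo bm) \<and>
       h \<in> Mor X \<and> Dom X h = fst s \<and> Cod X h = fst t \<and>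
       k \<in> Mor Y \<and> Dom Y k = fst (snd s) \<and> Cod Y k = fst (snd t) \<and>
       Comp Z (snd (snd t)) (am h) = Comp Z (bm k) (snd (snd s))}"
  by (simp add: isocomma_def Let_def)

lemma isocomma_simps:
  "Dom (isocomma X Y Z ao am bo bm) = (\<lambda>(s,t,h,k). s)"
  "Cod (isocomma X Y Z ao am bo bm) = (\<lambda>(s,t,h,k). t)"
  "Comp (isocomma X Y Z ao am bo bm) = (\<lambda>(t',u,h',k') (s,t,h,k). (s, u, Comp X h' h, Comp Y k' k))"
  "Idm (isocomma X Y Z ao am bo bm) = (\<lambda>(x,y,g). ((x,y,g), (x,y,g), Idm X x, Idm Y y))"
  by (simp_all add: isocomma_def Let_def)

lemma incl_o_image_isocomma_iff:
  "(x, y, g) \<in> incl_o im ` Obj (isocomma X Y H ao am bo bm) \<longleftrightarrow>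
    x \<in> Obj X \<and> y \<in> Obj Y \<and> (\<exists>h\<in>Mor H. Dom H h = ao x \<and> Cod H h = bo y \<and> g = im h)"
  by (force simp: isocomma_Obj)

lemma isocomma_map_functor:
  assumes k: "is_functor E E' ko km" and l: "is_functor F F' lo lm"
  shows "is_functor (isocomma E F Z (ao \<circ> ko) (am \<circ> km) (bo \<circ> lo) (bm \<circ> lm))
    (isocomma E' F' Z ao am bo bm) (cmap_o ko lo) (cmap_m ko km lo lm)"
    (is "is_functor ?P ?P' _ _")
  unfolding is_functor_def
proof (intro conjI ballI impI)
  fix c assume c: "c \<in> Obj ?P"
  then show "cmap_o ko lo c \<in> Obj ?P'"
    by (auto simp: isocomma_Obj functor_Obj[OF k] functor_Obj[OF l])
  show "cmap_m ko km lo lm (Idm ?P c) = Idm ?P' (cmap_o ko lo c)"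
    using c by (auto simp: isocomma_Obj isocomma_simps functor_Idm[OF k] functor_Idm[OF l])
next
  fix f assume "f \<in> Mor ?P"
  then show "cmap_m ko km lo lm f \<in> Mor ?P'"
    and "Dom ?P' (cmap_m ko km lo lm f) = cmap_o ko lo (Dom ?P f)"
    and "Cod ?P' (cmap_m ko km lo lm f) = cmap_o ko lo (Cod ?P f)"
    by (auto simp: isocomma_Mor isocomma_Obj isocomma_simps
        functor_Obj[OF k] functor_Obj[OF l] functor_Mor[OF k] functor_Mor[OF l])
next
  fix f g assume "f \<in> Mor ?P" "g \<in> Mor ?P" "Cod ?P f = Dom ?P g"
  then show "cmap_m ko km lo lm (Comp ?P g f) =
      Comp ?P' (cmap_m ko km lo lm g) (cmap_m ko km lo lm f)"
    by (auto simp: isocomma_Mor isocomma_simps functor_Comp[OF k] functor_Comp[OF l])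
qed

lemma isocomma_map_faithful:
  assumes k: "faithful E E' ko km" and l: "faithful F F' lo lm"
  shows "faithful (isocomma E F Z (ao \<circ> ko) (am \<circ> km) (bo \<circ> lo) (bm \<circ> lm))
    (isocomma E' F' Z ao am bo bm) (cmap_o ko lo) (cmap_m ko km lo lm)"
  using k l unfolding faithful_def by (simp add: isocomma_map_functor isocomma_Mor isocomma_simps)

context
  fixes H :: "('oh,'mh) cat" and G :: "('og,'mg) cat" and io :: "'oh \<Rightarrow> 'og" and im :: "'mh \<Rightarrow> 'mg"
  assumes H: "is_groupoid H" and G: "is_category G" and i: "is_functor H G io im"
begin

lemma functor_image_right_cancel:
  assumes u: "u \<in> Mor H" and w: "w \<in> Mor H" "Dom H w = Dom H u"
    and p: "p \<in> Mor G" "Dom G p = io (Cod H u)" and eq: "Comp G p (im u) = im w"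
  shows "\<exists>h\<in>Mor H. Dom H h = Cod H u \<and> Cod H h = Cod H w \<and> p = im h"
proof -
  obtain u' where u': "u' \<in> Mor H" "Dom H u' = Cod H u" "Cod H u' = Dom H u"
    "Comp H u u' = Idm H (Cod H u)"
    using groupoid_inverse[OF H u] by blast
  have imu: "im u \<in> Mor G" "Dom G (im u) = io (Dom H u)" "Cod G (im u) = io (Cod H u)"
    and imu': "im u' \<in> Mor G" "Dom G (im u') = io (Cod H u)" "Cod G (im u') = io (Dom H u)"
    using functor_Mor[OF i u] functor_Mor[OF i u'(1)] u' by auto
  have "p = Comp G p (im (Idm H (Cod H u)))"
    using cat_Idm_unit[OF G p(1)] functor_Idm[OF i] cat_Dom_Cod_Obj[OF groupoid_is_category[OF H] u] p(2)
    by simp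
  also have "\<dots> = Comp G (Comp G p (im u)) (im u')"
    using u' imu imu' p functor_Comp[OF i u'(1) u] cat_Comp_assoc[OF G imu'(1) imu(1) p(1)] by simp
  also have "\<dots> = im (Comp H w u')"
    using eq functor_Comp[OF i u'(1) w(1)] u' w by simp
  finally show ?thesis
    using cat_Comp_Mor[OF groupoid_is_category[OF H] u'(1) w(1)] u' w by auto
qed

lemma functor_image_left_cancel:
  assumes v: "v \<in> Mor H" and w: "w \<in> Mor H" "Cod H w = Cod H v"
    and p: "p \<in> Mor G" "Cod G p = io (Dom H v)" and eq: "Comp G (im v) p = im w"
  shows "\<exists>h\<in>Mor H. Dom H h = Dom H w \<and> Cod H h = Dom H v \<and> p = im h"
proof -
  obtain v' where v': "v' \<in> Mor H" "Dom H v' = Cod H v" "Cod H v' = Dom H v"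
    "Comp H v' v = Idm H (Dom H v)"
    using groupoid_inverse[OF H v] by blast
  have imv: "im v \<in> Mor G" "Dom G (im v) = io (Dom H v)" "Cod G (im v) = io (Cod H v)"
    and imv': "im v' \<in> Mor G" "Dom G (im v') = io (Cod H v)" "Cod G (im v') = io (Dom H v)"
    using functor_Mor[OF i v] functor_Mor[OF i v'(1)] v' by auto
  have "p = Comp G (im (Idm H (Dom H v))) p"
    using cat_Idm_unit[OF G p(1)] functor_Idm[OF i] cat_Dom_Cod_Obj[OF groupoid_is_category[OF H] v] p(2)
    by simp
  also have "\<dots> = Comp G (im v') (Comp G (im v) p)"
    using v' imv imv' p functor_Comp[OF i v v'(1)] cat_Comp_assoc[OF G p(1) imv(1) imv'(1)] by simp
  also have "\<dots> = im (Comp H v' w)"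
    using eq functor_Comp[OF i w(1) v'(1)] v' w by simp
  finally show ?thesis
    using cat_Comp_Mor[OF groupoid_is_category[OF H] w(1) v'(1)] v' w by auto
qed

lemma functor_image_square_transport:
  assumes u: "u \<in> Mor H" and v: "v \<in> Mor H"
    and p: "p \<in> Mor G" "Dom G p = io (Cod H u)" and q: "q \<in> Mor G" "Cod G q = io (Dom H v)"
    and square: "Comp G p (im u) = Comp G (im v) q"
  shows "(\<exists>h\<in>Mor H. Dom H h = Dom H u \<and> Cod H h = Dom H v \<and> q = im h) \<longleftrightarrow>
    (\<exists>h\<in>Mor H. Dom H h = Cod H u \<and> Cod H h = Cod H v \<and> p = im h)"
proof
  assume "\<exists>h\<in>Mor H. Dom H h = Dom H u \<and> Cod H h = Dom H v \<and> q = im h"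
  then obtain h where h: "h \<in> Mor H" "Dom H h = Dom H u" "Cod H h = Dom H v" "q = im h"
    by blast
  have w: "Comp H v h \<in> Mor H" "Dom H (Comp H v h) = Dom H u" "Cod H (Comp H v h) = Cod H v"
    using cat_Comp_Mor[OF groupoid_is_category[OF H] h(1) v] h by auto
  have "Comp G p (im u) = im (Comp H v h)"
    using square h functor_Comp[OF i h(1) v] by simp
  from functor_image_right_cancel[OF u w(1,2) p this]
  show "\<exists>h\<in>Mor H. Dom H h = Cod H u \<and> Cod H h = Cod H v \<and> p = im h"
    using w(3) by simp
next
  assume "\<exists>h\<in>Mor H. Dom H h = Cod H u \<and> Cod H h = Cod H v \<and> p = im h"
  then obtain h where h: "h \<in> Mor H" "Dom H h = Cod H u" "Cod H h = Cod H v" "p = im h"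
    by blast
  have w: "Comp H h u \<in> Mor H" "Cod H (Comp H h u) = Cod H v" "Dom H (Comp H h u) = Dom H u"
    using cat_Comp_Mor[OF groupoid_is_category[OF H] u h(1)] h by auto
  have "Comp G (im v) q = im (Comp H h u)"
    using square h functor_Comp[OF i u h(1)] by simp
  from functor_image_left_cancel[OF v w(1,2) q this]
  show "\<exists>h\<in>Mor H. Dom H h = Dom H u \<and> Cod H h = Dom H v \<and> q = im h"
    using w(3) by simp
qed

lemma isocomma_edge_incl_image_iff:
  fixes E F eo em fo fm
  defines "P \<equiv> isocomma E F G (io \<circ> eo) (im \<circ> em) (io \<circ> fo) (im \<circ> fm)"
    and "Q \<equiv> isocomma E F H eo em fo fm"
  assumes e: "is_functor E H eo em" and f: "is_functor F H fo fm" and m: "m \<in> Mor P"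
  shows "Dom P m \<in> incl_o im ` Obj Q \<longleftrightarrow> Cod P m \<in> incl_o im ` Obj Q"
proof -
  obtain x1 y1 g1 x2 y2 g2 a b where m_eq: "m = ((x1,y1,g1),(x2,y2,g2),a,b)"
    by (cases m) auto
  from m have A: "x1 \<in> Obj E" "y1 \<in> Obj F" "x2 \<in> Obj E" "y2 \<in> Obj F"
    "g1 \<in> Mor G" "Cod G g1 = io (fo y1)" "g2 \<in> Mor G" "Dom G g2 = io (eo x2)"
    "a \<in> Mor E" "Dom E a = x1" "Cod E a = x2" "b \<in> Mor F" "Dom F b = y1" "Cod F b = y2"
    "Comp G g2 (im (em a)) = Comp G (im (fm b)) g1"
    by (auto simp: P_def m_eq isocomma_Mor isocomma_Obj)
  have u: "em a \<in> Mor H" "Dom H (em a) = eo x1" "Cod H (em a) = eo x2"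
    using functor_Mor[OF e A(9)] A by auto
  have v: "fm b \<in> Mor H" "Dom H (fm b) = fo y1" "Cod H (fm b) = fo y2"
    using functor_Mor[OF f A(12)] A by auto
  have "(\<exists>h\<in>Mor H. Dom H h = eo x1 \<and> Cod H h = fo y1 \<and> g1 = im h) \<longleftrightarrow>
      (\<exists>h\<in>Mor H. Dom H h = eo x2 \<and> Cod H h = fo y2 \<and> g2 = im h)"
    using functor_image_square_transport[OF u(1) v(1) A(7) A(8)[folded u(3)] A(5) A(6)[folded v(2)] A(15)]
    unfolding u v .
  then show ?thesis
    using A by (simp add: P_def Q_def m_eq isocomma_simps incl_o_image_isocomma_iff)
qed

lemma connected_isocomma_incl_image_iff:
  fixes E F eo em fo fm
  defines "P \<equiv> isocomma E F G (io \<circ> eo) (im \<circ> em) (io \<circ> fo) (im \<circ> fm)"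
    and "Q \<equiv> isocomma E F H eo em fo fm"
  assumes e: "is_functor E H eo em" and f: "is_functor F H fo fm" and c: "connected P c d"
  shows "c \<in> incl_o im ` Obj Q \<longleftrightarrow> d \<in> incl_o im ` Obj Q"
  using c unfolding connected_def
proof (induction rule: rtranclp_induct)
  case base
  show ?case ..
next
  case (step d d')
  then show ?case
    using isocomma_edge_incl_image_iff[OF e f, folded P_def Q_def] by blast
qed

lemma boundary_eq_full_sub:
  fixes E F eo em fo fm
  defines "P \<equiv> isocomma E F G (io \<circ> eo) (im \<circ> em) (io \<circ> fo) (im \<circ> fm)"
    and "Q \<equiv> isocomma E F H eo em fo fm"
  assumes e: "is_functor E H eo em" and f: "is_functor F H fo fm"
  shows "boundary E F H G io im eo em fo fm = full_sub P (Obj P - incl_o im ` Obj Q)"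
proof -
  have refl: "connected P c c" for c
    by (simp add: connected_def)
  have "(\<exists>q\<in>Obj Q. connected P c (incl_o im q)) \<longleftrightarrow> c \<in> incl_o im ` Obj Q" for c
  proof
    assume "\<exists>q\<in>Obj Q. connected P c (incl_o im q)"
    then obtain q where "q \<in> Obj Q" "connected P c (incl_o im q)" by blast
    then show "c \<in> incl_o im ` Obj Q"
      using connected_isocomma_incl_image_iff[OF e f, folded P_def Q_def] by blast
  qed (use refl in blast)
  then have "{c \<in> Obj P. \<not> (\<exists>q\<in>Obj Q. connected P c (incl_o im q))} = Obj P - incl_o im ` Obj Q"
    by blast
  then show ?thesis
    by (simp add: boundary_def Let_def flip: P_def Q_def)
qed

end

lemma cmap_o_incl_o_commute: "cmap_o ko lo (incl_o im q) = incl_o im (cmap_o ko lo q)"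
  by (cases q) simp

lemma cmap_m_incl_m_commute:
  "cmap_m ko km lo lm (incl_m im f) = incl_m im (cmap_m ko km lo lm f)"
  by (cases f) (simp add: cmap_o_incl_o_commute)

lemma cmap_o_maps_incl_complement:
  assumes k: "is_functor E E' ko km" and l: "is_functor F F' lo lm"
  shows "cmap_o ko lo `
      (Obj (isocomma E F Z (ao \<circ> ko) am' (bo \<circ> lo) bm') -
        incl_o im ` Obj (isocomma E F H (eo \<circ> ko) (em \<circ> km) (fo \<circ> lo) (fm \<circ> lm)))
    \<subseteq> Obj (isocomma E' F' Z ao am bo bm) - incl_o im ` Obj (isocomma E' F' H eo em fo fm)"
proof (rule image_subsetI)
  fix c
  assume c: "c \<in> Obj (isocomma E F Z (ao \<circ> ko) am' (bo \<circ> lo) bm') -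
    incl_o im ` Obj (isocomma E F H (eo \<circ> ko) (em \<circ> km) (fo \<circ> lo) (fm \<circ> lm))"
  obtain x y g where c_eq: "c = (x, y, g)"
    by (cases c)
  show "cmap_o ko lo c \<in> Obj (isocomma E' F' Z ao am bo bm) -
    incl_o im ` Obj (isocomma E' F' H eo em fo fm)"
    using c unfolding c_eq cmap_o.simps Diff_iff incl_o_image_isocomma_iff
    by (auto simp: isocomma_Obj functor_Obj[OF k] functor_Obj[OF l])
qed

theorem proposition4p10:
  fixes H :: "('oh,'mh) cat" and G :: "('og,'mg) cat"
    and E :: "('oe,'me) cat" and E' :: "('oe2,'me2) cat"
    and F :: "('of,'mf) cat" and F' :: "('of2,'mf2) cat"
    and io :: "'oh \<Rightarrow> 'og" and im :: "'mh \<Rightarrow> 'mg"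
    and ko :: "'oe \<Rightarrow> 'oe2" and km :: "'me \<Rightarrow> 'me2"
    and eo :: "'oe2 \<Rightarrow> 'oh" and em :: "'me2 \<Rightarrow> 'mh"
    and lo :: "'of \<Rightarrow> 'of2" and lm :: "'mf \<Rightarrow> 'mf2"
    and fo :: "'of2 \<Rightarrow> 'oh" and fm :: "'mf2 \<Rightarrow> 'mh"
  assumes fgH: "finite_groupoid H" and fgG: "finite_groupoid G"
    and fgE: "finite_groupoid E" and fgE': "finite_groupoid E'"
    and fgF: "finite_groupoid F" and fgF': "finite_groupoid F'"
    and i_faithful: "faithful H G io im"
    and k_faithful: "faithful E E' ko km"
    and iotaE'_faithful: "faithful E' H eo em"
    and l_faithful: "faithful F F' lo lm"
    and iotaF'_faithful: "faithful F' H fo fm"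
  defines "EGF \<equiv> isocomma E F G (io \<circ> (eo \<circ> ko)) (im \<circ> (em \<circ> km)) (io \<circ> (fo \<circ> lo)) (im \<circ> (fm \<circ> lm))"
    and "EHF \<equiv> isocomma E F H (eo \<circ> ko) (em \<circ> km) (fo \<circ> lo) (fm \<circ> lm)"
    and "E'GF' \<equiv> isocomma E' F' G (io \<circ> eo) (im \<circ> em) (io \<circ> fo) (im \<circ> fm)"
    and "E'HF' \<equiv> isocomma E' F' H eo em fo fm"
    and "dEF \<equiv> boundary E F H G io im (eo \<circ> ko) (em \<circ> km) (fo \<circ> lo) (fm \<circ> lm)"
    and "dE'F' \<equiv> boundary E' F' H G io im eo em fo fm"
  shows
    "is_functor EGF E'GF' (cmap_o ko lo) (cmap_m ko km lo lm)
     \<and> (\<forall>q \<in> Obj EHF. cmap_o ko lo q \<in> Obj E'HF'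
          \<and> cmap_o ko lo (incl_o im q) = incl_o im (cmap_o ko lo q))
     \<and> (\<forall>f \<in> Mor EHF. cmap_m ko km lo lm f \<in> Mor E'HF'
          \<and> cmap_m ko km lo lm (incl_m im f) = incl_m im (cmap_m ko km lo lm f))
     \<and> (\<forall>c \<in> Obj dEF. cmap_o ko lo c \<in> Obj dE'F')
     \<and> (\<forall>f \<in> Mor dEF. cmap_m ko km lo lm f \<in> Mor dE'F')
     \<and> faithful dEF dE'F' (cmap_o ko lo) (cmap_m ko km lo lm)"
proof -
  have H: "is_groupoid H" and G: "is_category G"
    using fgH fgG by (simp_all add: finite_groupoid_def is_groupoid_def)
  note i = faithful_functor[OF i_faithful] and k = faithful_functor[OF k_faithful]
    and l = faithful_functor[OF l_faithful] and e = faithful_functor[OF iotaE'_faithful]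
    and f = faithful_functor[OF iotaF'_faithful]
  have EGF_assoc: "EGF = isocomma E F G ((io \<circ> eo) \<circ> ko) ((im \<circ> em) \<circ> km) ((io \<circ> fo) \<circ> lo) ((im \<circ> fm) \<circ> lm)"
    by (simp add: EGF_def o_assoc)
  have map_G: "faithful EGF E'GF' (cmap_o ko lo) (cmap_m ko km lo lm)"
    unfolding EGF_assoc E'GF'_def by (rule isocomma_map_faithful[OF k_faithful l_faithful])
  have map_H: "is_functor EHF E'HF' (cmap_o ko lo) (cmap_m ko km lo lm)"
    unfolding EHF_def E'HF'_def by (rule isocomma_map_functor[OF k l])
  have dEF: "dEF = full_sub EGF (Obj EGF - incl_o im ` Obj EHF)"
    using boundary_eq_full_sub[OF H G i functor_compose[OF k e] functor_compose[OF l f]]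
    by (simp add: dEF_def EGF_def EHF_def)
  have dE'F': "dE'F' = full_sub E'GF' (Obj E'GF' - incl_o im ` Obj E'HF')"
    using boundary_eq_full_sub[OF H G i e f] by (simp add: dE'F'_def E'GF'_def E'HF'_def)
  have "cmap_o ko lo ` (Obj EGF - incl_o im ` Obj EHF) \<subseteq> Obj E'GF' - incl_o im ` Obj E'HF'"
    unfolding EGF_assoc EHF_def E'GF'_def E'HF'_def by (rule cmap_o_maps_incl_complement[OF k l])
  then have map_boundary: "faithful dEF dE'F' (cmap_o ko lo) (cmap_m ko km lo lm)"
    unfolding dEF dE'F' by (rule faithful_full_sub[OF map_G Diff_subset])
  then show ?thesis
    using functor_maps_Obj_Mor[OF faithful_functor[OF map_boundary]] functor_maps_Obj_Mor[OF map_H]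
      faithful_functor[OF map_G]
    by (simp add: cmap_o_incl_o_commute cmap_m_incl_m_commute)
qed

end
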